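(* Let $\Gamma_1=(V_1,E_1)$ be a graph of maximum degree $\Delta_1$ and let $\Gamma_2=(V_2,E_2)$ be a graph of maximum degree $\Delta_2$ and minimum degree $\delta_2$. Let $S\subseteq V_1$. (i) If $S$ is a global offensive $k$-alliance in $\Gamma_1$, then $S\times V_2$ is a global offensive $(k-\Delta_2)$-alliance in $\Gamma_1\times\Gamma_2$. (ii) If $S\times V_2$ is a global offensive $k$-alliance in $\Gamma_1\times\Gamma_2$, then $S$ is a global offensive $(k+\delta_2)$-alliance in $\Gamma_1$; moreover, $k\le\Delta_1-\delta_2$.
   Context: Graphs are finite and simple. In a graph $G=(V,E)$, for $S\subseteq V$ and $v\in V$, $\delta_S(v)$ is the number of neighbours of $v$ in $S$, $\overline{S}=V\setminus S$, and $\partial(S)$ the set of vertices of $\overline{S}$ with a neighbour in $S$. A nonempty $S$ is an offensive $k$-alliance in $G$ if $\delta_S(v)\ge\delta_{\overline{S}}(v)+k$ for every $v\in\partial(S)$, and a global offensive $k$-alliance if moreover it is dominating (every vertex of $\overline{S}$ has a neighbour in $S$). The Cartesian product $\Gamma_1\times\Gamma_2$ has vertex set $V_1\times V_2$, with $(u,v)\sim(u',v')$ iff either $u=u'$ and $v\sim v'$, or $v=v'$ and $u\sim u'$. *)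

theory Defs
  imports Main
begin

definition graph :: "'a set \<Rightarrow> ('a \<Rightarrow> 'a \<Rightarrow> bool) \<Rightarrow> bool" where
  "graph V E \<longleftrightarrow> finite V \<and> V \<noteq> {} \<and> (\<forall>u v. E u v \<longrightarrow> u \<in> V \<and> v \<in> V)
     \<and> (\<forall>u v. E u v \<longrightarrow> E v u) \<and> (\<forall>v. \<not> E v v)"

definition nbrs_in :: "('a \<Rightarrow> 'a \<Rightarrow> bool) \<Rightarrow> 'a set \<Rightarrow> 'a \<Rightarrow> nat" where
  "nbrs_in E S v = card {u \<in> S. E v u}"

definition degree :: "'a set \<Rightarrow> ('a \<Rightarrow> 'a \<Rightarrow> bool) \<Rightarrow> 'a \<Rightarrow> nat" where
  "degree V E v = nbrs_in E V v"

definition max_degree :: "'a set \<Rightarrow> ('a \<Rightarrow> 'a \<Rightarrow> bool) \<Rightarrow> nat" where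
  "max_degree V E = Max (degree V E ` V)"

definition min_degree :: "'a set \<Rightarrow> ('a \<Rightarrow> 'a \<Rightarrow> bool) \<Rightarrow> nat" where
  "min_degree V E = Min (degree V E ` V)"

definition boundary :: "'a set \<Rightarrow> ('a \<Rightarrow> 'a \<Rightarrow> bool) \<Rightarrow> 'a set \<Rightarrow> 'a set" where
  "boundary V E S = {v \<in> V - S. \<exists>u \<in> S. E v u}"

definition offensive_alliance :: "'a set \<Rightarrow> ('a \<Rightarrow> 'a \<Rightarrow> bool) \<Rightarrow> int \<Rightarrow> 'a set \<Rightarrow> bool" where
  "offensive_alliance V E k S \<longleftrightarrow> S \<noteq> {} \<and> S \<subseteq> V \<and>
     (\<forall>v \<in> boundary V E S. int (nbrs_in E S v) \<ge> int (nbrs_in E (V - S) v) + k)"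

definition dominating :: "'a set \<Rightarrow> ('a \<Rightarrow> 'a \<Rightarrow> bool) \<Rightarrow> 'a set \<Rightarrow> bool" where
  "dominating V E S \<longleftrightarrow> (\<forall>v \<in> V - S. \<exists>u \<in> S. E v u)"

definition global_offensive_alliance :: "'a set \<Rightarrow> ('a \<Rightarrow> 'a \<Rightarrow> bool) \<Rightarrow> int \<Rightarrow> 'a set \<Rightarrow> bool" where
  "global_offensive_alliance V E k S \<longleftrightarrow> offensive_alliance V E k S \<and> dominating V E S"

definition cart_edge :: "('a \<Rightarrow> 'a \<Rightarrow> bool) \<Rightarrow> ('b \<Rightarrow> 'b \<Rightarrow> bool) \<Rightarrow> 'a \<times> 'b \<Rightarrow> 'a \<times> 'b \<Rightarrow> bool" where
  "cart_edge E1 E2 x y \<longleftrightarrow>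
     (fst x = fst y \<and> E2 (snd x) (snd y)) \<or> (snd x = snd y \<and> E1 (fst x) (fst y))"

end

theory Submission
  imports Defs
begin

text \<open>A vertex (a,b) with a outside S sees S \<times> V2 only through its V1-layer, so its count
  there is the count of a in S; its neighbours outside S \<times> V2 are those of its V1-layer
  outside S together with its whole V2-fibre. Hence the alliance inequality at (a,b) in the
  product is the one at a in the first factor, with k shifted by deg(b). Taking b of
  maximum degree gives (i); taking b of minimum degree gives (ii), and the bound on k
  follows since at a boundary vertex k cannot exceed its number of neighbours in S.\<close>

lemma graphD:
  assumes "graph V E"
  shows "finite V" "V \<noteq> {}" "\<not> E v v"
  using assms unfolding graph_def by blast+

lemma degree_le_max_degree:
  assumes "graph V E" "v \<in> V"
  shows "degree V E v \<le> max_degree V E"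
  using graphD(1)[OF assms(1)] assms(2) unfolding max_degree_def by simp

lemma min_degree_attained:
  assumes "graph V E"
  obtains v where "v \<in> V" "degree V E v = min_degree V E"
proof -
  have "min_degree V E \<in> degree V E ` V"
    using graphD(1,2)[OF assms] unfolding min_degree_def by simp
  then show ?thesis using that by auto
qed

lemma nbrs_in_le_degree:
  assumes "graph V E" "S \<subseteq> V"
  shows "nbrs_in E S v \<le> degree V E v"
  using graphD(1)[OF assms(1)] assms(2) unfolding nbrs_in_def degree_def by (intro card_mono) auto

lemma nbrs_in_cart_edge_times:
  assumes "a \<notin> S" "b \<in> V2"
  shows "nbrs_in (cart_edge E1 E2) (S \<times> V2) (a, b) = nbrs_in E1 S a"
proof -
  have "{u \<in> S \<times> V2. cart_edge E1 E2 (a, b) u} = (\<lambda>x. (x, b)) ` {u \<in> S. E1 a u}"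
    using assms by (auto simp: cart_edge_def)
  moreover have "inj_on (\<lambda>x. (x, b)) {u \<in> S. E1 a u}" by (auto simp: inj_on_def)
  ultimately show ?thesis unfolding nbrs_in_def by (simp add: card_image)
qed

lemma nbrs_in_cart_edge_compl_times:
  assumes "graph V1 E1" "graph V2 E2" "a \<in> V1" "a \<notin> S" "b \<in> V2"
  shows "nbrs_in (cart_edge E1 E2) (V1 \<times> V2 - S \<times> V2) (a, b)
         = nbrs_in E1 (V1 - S) a + degree V2 E2 b"
proof -
  let ?layer = "(\<lambda>x. (x, b)) ` {u \<in> V1 - S. E1 a u}"
  let ?fibre = "Pair a ` {u \<in> V2. E2 b u}"
  have "{u \<in> V1 \<times> V2 - S \<times> V2. cart_edge E1 E2 (a, b) u} = ?layer \<union> ?fibre"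
    using assms by (auto simp: cart_edge_def)
  moreover have "?layer \<inter> ?fibre = {}"
    using graphD(3)[OF assms(1)] by auto
  moreover have "finite {u \<in> V1 - S. E1 a u}" "finite {u \<in> V2. E2 b u}"
    using graphD(1)[OF assms(1)] graphD(1)[OF assms(2)] by simp_all
  moreover have "inj_on (\<lambda>x. (x, b)) {u \<in> V1 - S. E1 a u}" "inj_on (Pair a) {u \<in> V2. E2 b u}"
    by (auto simp: inj_on_def)
  ultimately show ?thesis unfolding nbrs_in_def degree_def
    by (simp add: card_Un_disjoint card_image)
qed

lemma boundary_cart_edge_times:
  "(a, b) \<in> boundary (V1 \<times> V2) (cart_edge E1 E2) (S \<times> V2)
     \<longleftrightarrow> a \<in> boundary V1 E1 S \<and> b \<in> V2"
  unfolding boundary_def cart_edge_def by auto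

lemma dominating_cart_edge_times:
  assumes "V2 \<noteq> {}"
  shows "dominating (V1 \<times> V2) (cart_edge E1 E2) (S \<times> V2) \<longleftrightarrow> dominating V1 E1 S"
proof
  assume dom: "dominating (V1 \<times> V2) (cart_edge E1 E2) (S \<times> V2)"
  obtain b where "b \<in> V2" using assms by auto
  show "dominating V1 E1 S"
    unfolding dominating_def
  proof
    fix a assume "a \<in> V1 - S"
    with \<open>b \<in> V2\<close> obtain u where "u \<in> S \<times> V2" "cart_edge E1 E2 (a, b) u"
      using dom unfolding dominating_def by blast
    then show "\<exists>u\<in>S. E1 a u" using \<open>a \<in> V1 - S\<close> by (auto simp: cart_edge_def)
  qed
qed (fastforce simp: dominating_def cart_edge_def)

lemma alliance_ineq_cart_edge_times:
  assumes "graph V1 E1" "graph V2 E2" "a \<in> boundary V1 E1 S" "b \<in> V2"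
  shows "int (nbrs_in (cart_edge E1 E2) (S \<times> V2) (a, b))
           \<ge> int (nbrs_in (cart_edge E1 E2) (V1 \<times> V2 - S \<times> V2) (a, b)) + k
     \<longleftrightarrow> int (nbrs_in E1 S a) \<ge> int (nbrs_in E1 (V1 - S) a) + (k + int (degree V2 E2 b))"
proof -
  have "a \<in> V1" "a \<notin> S" using assms(3) by (auto simp: boundary_def)
  show ?thesis
    unfolding nbrs_in_cart_edge_times[OF \<open>a \<notin> S\<close> assms(4)]
      nbrs_in_cart_edge_compl_times[OF assms(1,2) \<open>a \<in> V1\<close> \<open>a \<notin> S\<close> assms(4)]
    by linarith
qed

lemma global_offensive_allianceI:
  assumes "S \<noteq> {}" "S \<subseteq> V" "dominating V E S"
    and "\<And>v. v \<in> boundary V E S \<Longrightarrow> int (nbrs_in E S v) \<ge> int (nbrs_in E (V - S) v) + k"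
  shows "global_offensive_alliance V E k S"
  using assms unfolding global_offensive_alliance_def offensive_alliance_def by blast

lemma global_offensive_allianceD:
  assumes "global_offensive_alliance V E k S"
  shows "S \<noteq> {}" "S \<subseteq> V" "dominating V E S"
    and "v \<in> boundary V E S \<Longrightarrow> int (nbrs_in E S v) \<ge> int (nbrs_in E (V - S) v) + k"
  using assms unfolding global_offensive_alliance_def offensive_alliance_def by blast+

lemma global_offensive_alliance_cart_edge_times:
  assumes g1: "graph V1 E1" and g2: "graph V2 E2"
    and goa: "global_offensive_alliance V1 E1 k S"
  shows "global_offensive_alliance (V1 \<times> V2) (cart_edge E1 E2)
           (k - int (max_degree V2 E2)) (S \<times> V2)"
proof (rule global_offensive_allianceI)
  have "V2 \<noteq> {}" using graphD(2)[OF g2] .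
  with global_offensive_allianceD(1-3)[OF goa]
  show "S \<times> V2 \<noteq> {}" "S \<times> V2 \<subseteq> V1 \<times> V2"
      "dominating (V1 \<times> V2) (cart_edge E1 E2) (S \<times> V2)"
    by (simp_all add: dominating_cart_edge_times Sigma_mono)
  fix v assume v_bd: "v \<in> boundary (V1 \<times> V2) (cart_edge E1 E2) (S \<times> V2)"
  obtain a b where v: "v = (a, b)" by (cases v)
  from v_bd have a: "a \<in> boundary V1 E1 S" and b: "b \<in> V2"
    unfolding v boundary_cart_edge_times by simp_all
  have "int (nbrs_in E1 S a)
      \<ge> int (nbrs_in E1 (V1 - S) a) + (k - int (max_degree V2 E2) + int (degree V2 E2 b))"
    using global_offensive_allianceD(4)[OF goa a] degree_le_max_degree[OF g2 b] by linarith
  then show "int (nbrs_in (cart_edge E1 E2) (S \<times> V2) v)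
      \<ge> int (nbrs_in (cart_edge E1 E2) (V1 \<times> V2 - S \<times> V2) v) + (k - int (max_degree V2 E2))"
    unfolding v alliance_ineq_cart_edge_times[OF g1 g2 a b] .
qed

lemma global_offensive_alliance_of_cart_edge_times:
  assumes g1: "graph V1 E1" and g2: "graph V2 E2"
    and goa: "global_offensive_alliance (V1 \<times> V2) (cart_edge E1 E2) k (S \<times> V2)"
  shows "global_offensive_alliance V1 E1 (k + int (min_degree V2 E2)) S"
proof (rule global_offensive_allianceI)
  obtain b where b: "b \<in> V2" "degree V2 E2 b = min_degree V2 E2"
    using min_degree_attained[OF g2] .
  then have "V2 \<noteq> {}" by blast
  with global_offensive_allianceD(1-3)[OF goa]
  show "S \<noteq> {}" "S \<subseteq> V1" "dominating V1 E1 S"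
    by (simp_all add: dominating_cart_edge_times times_subset_iff)
  fix a assume a: "a \<in> boundary V1 E1 S"
  then have "(a, b) \<in> boundary (V1 \<times> V2) (cart_edge E1 E2) (S \<times> V2)"
    unfolding boundary_cart_edge_times using b(1) by simp
  from global_offensive_allianceD(4)[OF goa this]
  show "int (nbrs_in E1 S a) \<ge> int (nbrs_in E1 (V1 - S) a) + (k + int (min_degree V2 E2))"
    unfolding alliance_ineq_cart_edge_times[OF g1 g2 a b(1)] b(2) .
qed

lemma global_offensive_alliance_le_max_degree:
  assumes g: "graph V E" and goa: "global_offensive_alliance V E k S" and "S \<noteq> V"
  shows "k \<le> int (max_degree V E)"
proof -
  note goaD = global_offensive_allianceD[OF goa]
  obtain a where "a \<in> V" "a \<notin> S" using goaD(2) \<open>S \<noteq> V\<close> by auto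
  then have "a \<in> boundary V E S"
    using goaD(3) unfolding dominating_def boundary_def by auto
  then have "int (nbrs_in E S a) \<ge> k" using goaD(4) by fastforce
  moreover have "nbrs_in E S a \<le> max_degree V E"
    using nbrs_in_le_degree[OF g goaD(2)] degree_le_max_degree[OF g \<open>a \<in> V\<close>] le_trans by blast
  ultimately show ?thesis by linarith
qed

theorem mainTheorem13:
  fixes V1 :: "'a set" and E1 :: "'a \<Rightarrow> 'a \<Rightarrow> bool"
    and V2 :: "'b set" and E2 :: "'b \<Rightarrow> 'b \<Rightarrow> bool"
    and S :: "'a set" and k :: int
  assumes "graph V1 E1" and "graph V2 E2" and "S \<subseteq> V1"
  shows "(global_offensive_alliance V1 E1 k S \<longrightarrow>
           global_offensive_alliance (V1 \<times> V2) (cart_edge E1 E2)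
             (k - int (max_degree V2 E2)) (S \<times> V2))
       \<and> (global_offensive_alliance (V1 \<times> V2) (cart_edge E1 E2) k (S \<times> V2) \<longrightarrow>
           global_offensive_alliance V1 E1 (k + int (min_degree V2 E2)) S
           \<and> (S \<noteq> V1 \<longrightarrow> k \<le> int (max_degree V1 E1) - int (min_degree V2 E2)))"
proof (intro conjI impI)
  show "global_offensive_alliance (V1 \<times> V2) (cart_edge E1 E2)
      (k - int (max_degree V2 E2)) (S \<times> V2)"
    if "global_offensive_alliance V1 E1 k S"
    using global_offensive_alliance_cart_edge_times[OF assms(1,2) that] .
  assume prod: "global_offensive_alliance (V1 \<times> V2) (cart_edge E1 E2) k (S \<times> V2)"
  show goa: "global_offensive_alliance V1 E1 (k + int (min_degree V2 E2)) S"
    using global_offensive_alliance_of_cart_edge_times[OF assms(1,2) prod] .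
  show "k \<le> int (max_degree V1 E1) - int (min_degree V2 E2)" if "S \<noteq> V1"
    using global_offensive_alliance_le_max_degree[OF assms(1) goa that] by linarith
qed

end
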